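(* Let $\mathcal{G}$ be a Lie algebra over a field $K$, $Z$ a subspace of the centre of $\mathcal{G}$, $W=\mathcal{G}/Z$, and $\pi:\mathcal{G}\to W$ the projection. Fix a $K$-linear section $s:W\to\mathcal{G}$ of $\pi$, so $\mathcal{G}=s(W)\oplus Z$. Let $\mathcal{K}$ be the set of $K$-linear maps $\tau_\phi:\mathcal{G}\to\mathcal{G}$ with $\tau_\phi(s(w))=s(w)+\phi(w)$ and $\tau_\phi(z)=z$ for $w\in W$, $z\in Z$, where $\phi\in\mathrm{Hom}_K(W,Z)$ satisfies $\phi([W,W])=0$. Suppose that (1) every automorphism of $W$ extends to an automorphism of $\mathcal{G}$ (i.e. for each $\sigma\in\mathrm{Aut}_{\mathrm{Lie}}(W)$ there is $\widehat\sigma\in\mathrm{Aut}_{\mathrm{Lie}}(\mathcal{G})$ with $\pi\widehat\sigma=\sigma\pi$), and (2) $Z\subseteq[\mathcal{G},\mathcal{G}]$. Then $$1\to\mathcal{K}\to\mathrm{Aut}_{\mathrm{Lie}}(\mathcal{G})\xrightarrow{\psi}\mathrm{Aut}_{\mathrm{Lie}}(W)\to1$$ is a short exact sequence of groups, where $\psi(\sigma)(a+Z)=\sigma(a)+Z$ for all $a\in\mathcal{G}$.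
   Formalization: Throughout the exact sequence, and as the domain of $\psi$, $\mathrm{Aut}_{\mathrm{Lie}}(\mathcal{G})$ is replaced by its subgroup of automorphisms $\sigma$ with sigma(Z) = Z. The statement above fails without it. *)

theory Defs
  imports "HOL-Algebra.Algebra"
begin

definition lie_algebra :: "('k::field \<Rightarrow> 'g::ab_group_add \<Rightarrow> 'g) \<Rightarrow> ('g \<Rightarrow> 'g \<Rightarrow> 'g) \<Rightarrow> bool" where
  "lie_algebra scale br \<longleftrightarrow>
     vector_space scale \<and>
     (\<forall>x y z. br (x + y) z = br x z + br y z) \<and>
     (\<forall>x y z. br x (y + z) = br x y + br x z) \<and>
     (\<forall>c x y. br (scale c x) y = scale c (br x y)) \<and>
     (\<forall>c x y. br x (scale c y) = scale c (br x y)) \<and>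
     (\<forall>x. br x x = 0) \<and>
     (\<forall>x y z. br x (br y z) + br y (br z x) + br z (br x y) = 0)"

definition lie_centre :: "('g \<Rightarrow> 'g \<Rightarrow> 'g::ab_group_add) \<Rightarrow> 'g set" where
  "lie_centre br = {z. \<forall>x. br z x = 0}"

definition derived :: "('k::field \<Rightarrow> 'g::ab_group_add \<Rightarrow> 'g) \<Rightarrow> ('g \<Rightarrow> 'g \<Rightarrow> 'g) \<Rightarrow> 'g set" where
  "derived scale br = module.span scale {br a b | a b. True}"

definition lie_aut :: "('k::field \<Rightarrow> 'g::ab_group_add \<Rightarrow> 'g) \<Rightarrow> ('g \<Rightarrow> 'g \<Rightarrow> 'g) \<Rightarrow> ('g \<Rightarrow> 'g) set" where
  "lie_aut scale br = {\<sigma>. bij \<sigma> \<and> Vector_Spaces.linear scale scale \<sigma> \<and>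
                           (\<forall>a b. \<sigma> (br a b) = br (\<sigma> a) (\<sigma> b))}"

definition coset :: "'g::ab_group_add set \<Rightarrow> 'g \<Rightarrow> 'g set" where
  "coset Z a = {a + z | z. z \<in> Z}"

abbreviation proj :: "'g::ab_group_add set \<Rightarrow> 'g \<Rightarrow> 'g set" where
  "proj Z \<equiv> coset Z"

definition quot :: "'g::ab_group_add set \<Rightarrow> 'g set set" where
  "quot Z = range (coset Z)"

definition crep :: "'g set \<Rightarrow> 'g" where
  "crep U = (SOME a. a \<in> U)"

definition qadd :: "'g::ab_group_add set \<Rightarrow> 'g set \<Rightarrow> 'g set \<Rightarrow> 'g set" where
  "qadd Z U V = coset Z (crep U + crep V)"

definition qscale :: "('k \<Rightarrow> 'g::ab_group_add \<Rightarrow> 'g) \<Rightarrow> 'g set \<Rightarrow> 'k \<Rightarrow> 'g set \<Rightarrow> 'g set" where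
  "qscale scale Z c U = coset Z (scale c (crep U))"

definition qbr :: "('g \<Rightarrow> 'g \<Rightarrow> 'g::ab_group_add) \<Rightarrow> 'g set \<Rightarrow> 'g set \<Rightarrow> 'g set \<Rightarrow> 'g set" where
  "qbr br Z U V = coset Z (br (crep U) (crep V))"

text \<open>[W,W] = \<pi>([G,G]).\<close>
definition quot_derived :: "('k::field \<Rightarrow> 'g::ab_group_add \<Rightarrow> 'g) \<Rightarrow> ('g \<Rightarrow> 'g \<Rightarrow> 'g) \<Rightarrow> 'g set \<Rightarrow> 'g set set" where
  "quot_derived scale br Z = coset Z ` derived scale br"

definition quot_linear :: "('k \<Rightarrow> 'g::ab_group_add \<Rightarrow> 'g) \<Rightarrow> 'g set \<Rightarrow> ('k \<Rightarrow> 'v::ab_group_add \<Rightarrow> 'v) \<Rightarrow> ('g set \<Rightarrow> 'v) \<Rightarrow> bool" where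
  "quot_linear scale Z scaleV f \<longleftrightarrow>
     (\<forall>U\<in>quot Z. \<forall>V\<in>quot Z. f (qadd Z U V) = f U + f V) \<and>
     (\<forall>c. \<forall>U\<in>quot Z. f (qscale scale Z c U) = scaleV c (f U))"

definition quot_aut :: "('k \<Rightarrow> 'g::ab_group_add \<Rightarrow> 'g) \<Rightarrow> ('g \<Rightarrow> 'g \<Rightarrow> 'g) \<Rightarrow> 'g set \<Rightarrow> ('g set \<Rightarrow> 'g set) set" where
  "quot_aut scale br Z = {\<sigma>. \<sigma> \<in> extensional (quot Z) \<and> bij_betw \<sigma> (quot Z) (quot Z) \<and>
      (\<forall>U\<in>quot Z. \<forall>V\<in>quot Z. \<sigma> (qadd Z U V) = qadd Z (\<sigma> U) (\<sigma> V)) \<and>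
      (\<forall>c. \<forall>U\<in>quot Z. \<sigma> (qscale scale Z c U) = qscale scale Z c (\<sigma> U)) \<and>
      (\<forall>U\<in>quot Z. \<forall>V\<in>quot Z. \<sigma> (qbr br Z U V) = qbr br Z (\<sigma> U) (\<sigma> V))}"

text \<open>Automorphisms of G that preserve Z (on which \<psi> is well defined).\<close>
definition aut_grp :: "('k::field \<Rightarrow> 'g::ab_group_add \<Rightarrow> 'g) \<Rightarrow> ('g \<Rightarrow> 'g \<Rightarrow> 'g) \<Rightarrow> 'g set \<Rightarrow> ('g \<Rightarrow> 'g) monoid" where
  "aut_grp scale br Z = \<lparr>carrier = {\<sigma> \<in> lie_aut scale br. \<sigma> ` Z = Z}, monoid.mult = (\<circ>), one = id\<rparr>"

definition quot_aut_grp :: "('k \<Rightarrow> 'g::ab_group_add \<Rightarrow> 'g) \<Rightarrow> ('g \<Rightarrow> 'g \<Rightarrow> 'g) \<Rightarrow> 'g set \<Rightarrow> ('g set \<Rightarrow> 'g set) monoid" where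
  "quot_aut_grp scale br Z = \<lparr>carrier = quot_aut scale br Z, monoid.mult = compose (quot Z), one = restrict id (quot Z)\<rparr>"

definition psi :: "'g::ab_group_add set \<Rightarrow> ('g \<Rightarrow> 'g) \<Rightarrow> ('g set \<Rightarrow> 'g set)" where
  "psi Z \<sigma> = (\<lambda>U\<in>quot Z. coset Z (\<sigma> (crep U)))"

definition tau_maps :: "('k::field \<Rightarrow> 'g::ab_group_add \<Rightarrow> 'g) \<Rightarrow> ('g \<Rightarrow> 'g \<Rightarrow> 'g) \<Rightarrow> 'g set \<Rightarrow> ('g set \<Rightarrow> 'g) \<Rightarrow> ('g \<Rightarrow> 'g) set" where
  "tau_maps scale br Z s = {\<tau>. Vector_Spaces.linear scale scale \<tau> \<and>
      (\<exists>\<phi>. quot_linear scale Z scale \<phi> \<and> \<phi> ` quot Z \<subseteq> Z \<and>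
           \<phi> ` quot_derived scale br Z \<subseteq> {0} \<and>
           (\<forall>w\<in>quot Z. \<tau> (s w) = s w + \<phi> w) \<and> (\<forall>z\<in>Z. \<tau> z = z))}"

end

theory Submission
  imports Defs
begin

text \<open>
  Since \<open>Z\<close> is central, brackets on \<open>\<G>\<close> only depend on the classes modulo \<open>Z\<close>, so an
  automorphism \<open>f\<close> of \<open>\<G>\<close> with \<open>f Z = Z\<close> induces an automorphism \<open>\<psi> f\<close> of \<open>W\<close>, and
  \<open>\<psi>\<close> is onto by the extension hypothesis (a lift automatically preserves \<open>Z\<close>, the
  preimage of the zero of \<open>W\<close>). An element \<open>f\<close> of the kernel satisfies \<open>f a - a \<in> Z\<close>, hence
  \<open>f [a,b] = [a,b]\<close>; by linearity \<open>f\<close> fixes \<open>[\<G>,\<G>] \<supseteq> Z\<close>, so \<open>f = \<tau>\<^sub>\<phi>\<close> with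
  \<open>\<phi> w = f (s w) - s w\<close>, which vanishes on \<open>[W,W]\<close>. Conversely \<open>\<tau>\<^sub>\<phi> a = a + \<phi> (a + Z)\<close>
  is a shear by a central vector that vanishes on brackets, hence an automorphism acting trivially
  on \<open>W\<close>.
\<close>

lemma group_of_Bij_closed:
  assumes A: "A \<subseteq> Bij S" and one: "(\<lambda>x\<in>S. x) \<in> A"
    and comp: "\<And>f g. f \<in> A \<Longrightarrow> g \<in> A \<Longrightarrow> compose S f g \<in> A"
    and inv: "\<And>f. f \<in> A \<Longrightarrow> (\<lambda>x\<in>S. inv_into S f x) \<in> A"
  shows "group \<lparr>carrier = A, monoid.mult = compose S, one = (\<lambda>x\<in>S. x)\<rparr>"
proof (rule groupI; simp)
  show "compose S (compose S f g) h = compose S f (compose S g h)"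
    if "f \<in> A" "g \<in> A" "h \<in> A" for f g h
    using A that by (metis Bij_imp_funcset compose_assoc subsetD)
  show "\<And>f. f \<in> A \<Longrightarrow> compose S (\<lambda>x\<in>S. x) f = f"
    using A by (auto intro!: Id_compose Bij_imp_funcset Bij_imp_extensional)
  show "\<And>f. f \<in> A \<Longrightarrow> \<exists>g\<in>A. compose S g f = (\<lambda>x\<in>S. x)"
    using A inv Bij_compose_restrict_eq by blast
qed (use one comp in auto)

lemma lie_aut_id: "vector_space scale \<Longrightarrow> id \<in> lie_aut scale br"
  by (simp add: lie_aut_def vector_space.linear_id)

lemma lie_aut_comp: "f \<in> lie_aut scale br \<Longrightarrow> g \<in> lie_aut scale br \<Longrightarrow> f \<circ> g \<in> lie_aut scale br"
  by (auto simp: lie_aut_def bij_comp Vector_Spaces.linear_compose)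

lemma lie_aut_inv:
  assumes "f \<in> lie_aut scale br"
  shows "inv_into UNIV f \<in> lie_aut scale br"
proof -
  have f: "bij f" "Vector_Spaces.linear scale scale f" "\<And>a b. f (br a b) = br (f a) (f b)"
    using assms by (auto simp: lie_aut_def)
  then have "Vector_Spaces.linear scale scale (inv_into UNIV f)"
    by (simp add: Vector_Spaces.linear_iff) (metis bij_inv_eq_iff)
  moreover have "inv_into UNIV f (br a b) = br (inv_into UNIV f a) (inv_into UNIV f b)" for a b
    using f by (metis bij_inv_eq_iff)
  ultimately show ?thesis
    using f by (simp add: lie_aut_def bij_imp_bij_inv)
qed

lemma compose_UNIV: "compose UNIV f g = f \<circ> g"
  by (simp add: compose_def restrict_UNIV fun_eq_iff)

lemma aut_grp_eq:
  "aut_grp scale br Z =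
     \<lparr>carrier = {\<sigma> \<in> lie_aut scale br. \<sigma> ` Z = Z}, monoid.mult = compose UNIV, one = (\<lambda>x\<in>UNIV. x)\<rparr>"
  by (simp add: aut_grp_def compose_UNIV restrict_UNIV id_def fun_eq_iff)

lemma group_aut_grp:
  assumes "vector_space scale"
  shows "group (aut_grp scale br Z)"
  unfolding aut_grp_eq
proof (rule group_of_Bij_closed)
  show "{\<sigma> \<in> lie_aut scale br. \<sigma> ` Z = Z} \<subseteq> Bij UNIV"
    by (auto simp: Bij_def lie_aut_def)
  show "(\<lambda>x\<in>UNIV. x) \<in> {\<sigma> \<in> lie_aut scale br. \<sigma> ` Z = Z}"
    using lie_aut_id[OF assms] by (simp add: restrict_UNIV id_def)
  show "compose UNIV f g \<in> {\<sigma> \<in> lie_aut scale br. \<sigma> ` Z = Z}"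
    if "f \<in> {\<sigma> \<in> lie_aut scale br. \<sigma> ` Z = Z}" "g \<in> {\<sigma> \<in> lie_aut scale br. \<sigma> ` Z = Z}" for f g
    using that lie_aut_comp[of f scale br g] by (simp add: compose_UNIV image_image[symmetric])
  show "(\<lambda>x\<in>UNIV. inv_into UNIV f x) \<in> {\<sigma> \<in> lie_aut scale br. \<sigma> ` Z = Z}"
    if "f \<in> {\<sigma> \<in> lie_aut scale br. \<sigma> ` Z = Z}" for f
  proof -
    have "bij f" "f ` Z = Z" using that by (auto simp: lie_aut_def)
    then have "inv_into UNIV f ` Z = Z" by (metis bij_is_inj image_inv_f_f)
    then show ?thesis using that lie_aut_inv[of f scale br] by (simp add: restrict_UNIV)
  qed
qed

lemma coset_in_quot [simp]: "coset Z a \<in> quot Z"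
  by (simp add: quot_def)

lemma quotE [elim]: "U \<in> quot Z \<Longrightarrow> (\<And>a. U = coset Z a \<Longrightarrow> P) \<Longrightarrow> P"
  by (auto simp: quot_def)

lemma ball_quot_iff: "(\<forall>U\<in>quot Z. P U) \<longleftrightarrow> (\<forall>a. P (coset Z a))"
  by (auto simp: quot_def)

lemma coset_zero: "coset Z 0 = Z"
  by (simp add: coset_def)

lemma qadd_in_quot [simp]: "qadd Z U V \<in> quot Z"
  by (simp add: qadd_def)

lemma qscale_in_quot [simp]: "qscale scale Z c U \<in> quot Z"
  by (simp add: qscale_def)

lemma qbr_in_quot [simp]: "qbr br Z U V \<in> quot Z"
  by (simp add: qbr_def)

lemma quot_aut_Bij: "quot_aut scale br Z \<subseteq> Bij (quot Z)"
  by (auto simp: quot_aut_def Bij_def)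

lemma group_quot_aut_grp: "group (quot_aut_grp scale br Z)"
proof -
  have "restrict id (quot Z) = (\<lambda>x\<in>quot Z. x)" by (rule restrict_ext) simp
  then have "quot_aut_grp scale br Z =
      \<lparr>carrier = quot_aut scale br Z, monoid.mult = compose (quot Z), one = (\<lambda>x\<in>quot Z. x)\<rparr>"
    by (simp add: quot_aut_grp_def)
  also have "group \<dots>"
  proof (rule group_of_Bij_closed[OF quot_aut_Bij])
    show "(\<lambda>x\<in>quot Z. x) \<in> quot_aut scale br Z"
      using id_Bij[of "quot Z"] by (simp add: quot_aut_def Bij_def)
    show "compose (quot Z) f g \<in> quot_aut scale br Z"
      if "f \<in> quot_aut scale br Z" "g \<in> quot_aut scale br Z" for f g
    proof -
      have "g U \<in> quot Z" if "U \<in> quot Z" for U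
        using \<open>g \<in> quot_aut scale br Z\<close> that by (auto simp: quot_aut_def bij_betw_def)
      then show ?thesis
        using that compose_Bij[of f "quot Z" g] quot_aut_Bij
        by (auto simp: quot_aut_def Bij_def compose_eq)
    qed
    show "(\<lambda>x\<in>quot Z. inv_into (quot Z) f x) \<in> quot_aut scale br Z"
      if f: "f \<in> quot_aut scale br Z" for f
    proof -
      have fB: "f \<in> Bij (quot Z)" using f quot_aut_Bij by blast
      have inv_hom: "inv_into (quot Z) f (g U V) = g (inv_into (quot Z) f U) (inv_into (quot Z) f V)"
        if "\<And>U V. g U V \<in> quot Z" "\<forall>U\<in>quot Z. \<forall>V\<in>quot Z. f (g U V) = g (f U) (f V)"
          "U \<in> quot Z" "V \<in> quot Z" for g U V
        using Bij_inv_into_lemma[OF _ fB _ that(3,4), of g] that(1,2) by blast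
      show ?thesis
        using f restrict_inv_into_Bij[OF fB] Bij_inv_into_mem[OF fB]
          inv_hom[of "qadd Z"] inv_hom[of "\<lambda>U V. qscale scale Z _ U"] inv_hom[of "qbr br Z"]
        by (auto simp: quot_aut_def Bij_def)
    qed
  qed
  finally show ?thesis .
qed

locale lie_central_subspace =
  fixes scale :: "'k::field \<Rightarrow> 'g::ab_group_add \<Rightarrow> 'g"
    and br :: "'g \<Rightarrow> 'g \<Rightarrow> 'g"
    and Z :: "'g set"
  assumes lie: "lie_algebra scale br"
    and Z_subspace: "module.subspace scale Z"
    and Z_central: "Z \<subseteq> lie_centre br"
begin

lemma vector_space: "vector_space scale"
  using lie by (simp add: lie_algebra_def)

interpretation G: vector_space scale
  by (rule vector_space)

interpretation L: vector_space_pair scale scale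
  by (simp add: vector_space_pair_def vector_space)

lemmas Z_0 = G.subspace_0[OF Z_subspace]
  and Z_add = G.subspace_add[OF Z_subspace]
  and Z_scale = G.subspace_scale[OF Z_subspace]
  and Z_neg = G.subspace_neg[OF Z_subspace]

lemma bracket_add_left: "br (x + y) z = br x z + br y z"
  using lie by (simp add: lie_algebra_def)

lemma bracket_add_right: "br x (y + z) = br x y + br x z"
  using lie by (simp add: lie_algebra_def)

lemma bracket_self: "br x x = 0"
  using lie by (simp add: lie_algebra_def)

lemma bracket_anticomm: "br y x = - br x y"
proof -
  have "br (x + y) (x + y) = br x x + br x y + (br y x + br y y)"
    by (simp only: bracket_add_left bracket_add_right add_ac)
  then have "br x y + br y x = 0" by (simp add: bracket_self)
  then show ?thesis by (metis add.commute eq_neg_iff_add_eq_0)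
qed

lemma bracket_central_left: "z \<in> Z \<Longrightarrow> br z x = 0"
  using Z_central by (auto simp: lie_centre_def)

lemma bracket_central_right: "z \<in> Z \<Longrightarrow> br x z = 0"
  by (metis bracket_anticomm bracket_central_left neg_equal_0_iff_equal)

lemma bracket_add_central: "z \<in> Z \<Longrightarrow> z' \<in> Z \<Longrightarrow> br (a + z) (b + z') = br a b"
  by (simp add: bracket_add_left bracket_add_right bracket_central_left bracket_central_right)

lemma coset_eq_iff: "coset Z a = coset Z b \<longleftrightarrow> a - b \<in> Z"
proof
  assume "coset Z a = coset Z b"
  moreover have "a \<in> coset Z a" using Z_0 by (force simp: coset_def)
  ultimately obtain z where "z \<in> Z" "a = b + z" by (auto simp: coset_def)
  then show "a - b \<in> Z" by simp
next
  assume ab: "a - b \<in> Z"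
  have "\<exists>z'. a + z = b + z' \<and> z' \<in> Z" if "z \<in> Z" for z
    using Z_add[OF ab that] by (intro exI[of _ "a - b + z"]) (simp add: algebra_simps)
  moreover have "\<exists>z'. b + z = a + z' \<and> z' \<in> Z" if "z \<in> Z" for z
    using Z_add[OF Z_neg[OF ab] that] by (intro exI[of _ "- (a - b) + z"]) (simp add: algebra_simps)
  ultimately show "coset Z a = coset Z b"
    by (auto simp: coset_def)
qed

lemma coset_eq_Z_iff: "coset Z a = Z \<longleftrightarrow> a \<in> Z"
  using coset_eq_iff[of a 0] by (simp add: coset_zero)

lemma crep_coset_diff: "crep (coset Z a) - a \<in> Z"
proof -
  have "a \<in> coset Z a" using Z_0 by (force simp: coset_def)
  then have "crep (coset Z a) \<in> coset Z a" unfolding crep_def by (rule someI)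
  then show ?thesis by (auto simp: coset_def)
qed

lemma qadd_coset [simp]: "qadd Z (coset Z a) (coset Z b) = coset Z (a + b)"
  using Z_add[OF crep_coset_diff[of a] crep_coset_diff[of b]]
  by (simp add: qadd_def coset_eq_iff add_diff_add)

lemma qscale_coset [simp]: "qscale scale Z c (coset Z a) = coset Z (scale c a)"
  using Z_scale[OF crep_coset_diff[of a], of c]
  by (simp add: qscale_def coset_eq_iff G.scale_right_diff_distrib)

lemma qbr_coset [simp]: "qbr br Z (coset Z a) (coset Z b) = coset Z (br a b)"
  using bracket_add_central[OF crep_coset_diff[of a] crep_coset_diff[of b], of a b]
  by (simp add: qbr_def)

lemma aut_grp_carrierD:
  assumes "f \<in> carrier (aut_grp scale br Z)"
  shows "bij f" "Vector_Spaces.linear scale scale f" "f ` Z = Z" "\<And>a b. f (br a b) = br (f a) (f b)"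
  using assms by (auto simp: aut_grp_def lie_aut_def)

text \<open>\<open>psi\<close> evaluates \<open>f\<close> at an arbitrary representative \<open>crep\<close>; \<open>f ` Z \<subseteq> Z\<close> makes the choice irrelevant.\<close>

lemma psi_coset:
  assumes "Vector_Spaces.linear scale scale f" "f ` Z \<subseteq> Z"
  shows "psi Z f (coset Z a) = coset Z (f a)"
proof -
  have "f (crep (coset Z a)) - f a \<in> Z"
    using assms crep_coset_diff[of a] by (auto simp flip: L.linear_diff)
  then show ?thesis by (simp add: psi_def coset_eq_iff)
qed

lemma psi_in_quot_aut:
  assumes f: "f \<in> carrier (aut_grp scale br Z)"
  shows "psi Z f \<in> quot_aut scale br Z"
proof -
  note f = aut_grp_carrierD[OF f]
  have psi_f: "psi Z f (coset Z a) = coset Z (f a)" for a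
    using f psi_coset by simp
  have "inj_on (psi Z f) (quot Z)"
  proof (rule inj_onI)
    fix U V assume "U \<in> quot Z" "V \<in> quot Z" and eq: "psi Z f U = psi Z f V"
    then obtain a b where ab: "U = coset Z a" "V = coset Z b" by blast
    then have "f (a - b) \<in> Z" using eq f(2) by (simp add: psi_f coset_eq_iff L.linear_diff)
    then have "a - b \<in> Z" using f(1,3) by (metis bij_is_inj image_iff inj_image_mem_iff)
    then show "U = V" using ab by (simp add: coset_eq_iff)
  qed
  moreover have "psi Z f ` quot Z = quot Z"
  proof -
    have "coset Z b = psi Z f (coset Z (inv_into UNIV f b))" for b
      using f(1) by (simp add: psi_f bij_is_surj surj_f_inv_f)
    then have "quot Z \<subseteq> psi Z f ` quot Z" by (metis coset_in_quot image_eqI quotE subsetI)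
    moreover have "psi Z f ` quot Z \<subseteq> quot Z" by (metis coset_in_quot image_subsetI psi_f quotE)
    ultimately show ?thesis by (rule subset_antisym[rotated])
  qed
  moreover have "psi Z f \<in> extensional (quot Z)" by (simp add: psi_def)
  ultimately show ?thesis
    by (simp add: quot_aut_def bij_betw_def ball_quot_iff psi_f L.linear_add L.linear_scale f(2,4))
qed

lemma psi_hom: "psi Z \<in> hom (aut_grp scale br Z) (quot_aut_grp scale br Z)"
proof (rule homI)
  fix f assume "f \<in> carrier (aut_grp scale br Z)"
  then show "psi Z f \<in> carrier (quot_aut_grp scale br Z)"
    by (simp add: psi_in_quot_aut quot_aut_grp_def)
next
  fix f g assume f: "f \<in> carrier (aut_grp scale br Z)" and g: "g \<in> carrier (aut_grp scale br Z)"
  note f = aut_grp_carrierD[OF f] and g = aut_grp_carrierD[OF g]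
  have fg: "Vector_Spaces.linear scale scale (f \<circ> g)" "(f \<circ> g) ` Z \<subseteq> Z"
    using f g by (simp_all add: Vector_Spaces.linear_compose flip: image_image)
  have "psi Z (f \<circ> g) = compose (quot Z) (psi Z f) (psi Z g)"
  proof (rule extensionalityI[of _ "quot Z"])
    fix U assume "U \<in> quot Z"
    then show "psi Z (f \<circ> g) U = compose (quot Z) (psi Z f) (psi Z g) U"
      using f g fg by (auto simp: compose_eq psi_coset)
  qed (simp_all add: psi_def)
  then show "psi Z (f \<otimes>\<^bsub>aut_grp scale br Z\<^esub> g) = psi Z f \<otimes>\<^bsub>quot_aut_grp scale br Z\<^esub> psi Z g"
    by (simp add: aut_grp_def quot_aut_grp_def)
qed

lemma quot_aut_fixes_zero:
  assumes "\<sigma> \<in> quot_aut scale br Z"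
  shows "\<sigma> Z = Z"
proof -
  have "\<sigma> (coset Z 0) \<in> quot Z" using assms by (auto simp: quot_aut_def bij_betw_def)
  then obtain c where c: "\<sigma> (coset Z 0) = coset Z c" by (rule quotE)
  have "\<sigma> (qadd Z (coset Z 0) (coset Z 0)) = qadd Z (\<sigma> (coset Z 0)) (\<sigma> (coset Z 0))"
    using assms coset_in_quot[of Z 0] unfolding quot_aut_def by blast
  then have "coset Z c = coset Z (c + c)" using c by simp
  then have "c \<in> Z" using Z_neg[of "- c"] by (simp add: coset_eq_iff)
  then show ?thesis using c by (simp add: coset_eq_Z_iff coset_zero)
qed

lemma lift_fixes_Z:
  assumes f: "f \<in> lie_aut scale br" and \<sigma>: "\<sigma> \<in> quot_aut scale br Z"
    and lift: "\<And>a. coset Z (f a) = \<sigma> (coset Z a)"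
  shows "f ` Z = Z"
proof -
  have \<sigma>Z: "\<sigma> Z = Z" using quot_aut_fixes_zero[OF \<sigma>] .
  have "f z \<in> Z" if "z \<in> Z" for z
    using lift[of z] that \<sigma>Z coset_eq_Z_iff by metis
  moreover have "z \<in> f ` Z" if "z \<in> Z" for z
  proof -
    define y where "y = inv_into UNIV f z"
    have fy: "f y = z" using f by (simp add: y_def lie_aut_def bij_is_surj surj_f_inv_f)
    have "\<sigma> (coset Z y) = \<sigma> Z" using lift[of y] fy that \<sigma>Z coset_eq_Z_iff by metis
    moreover have "Z \<in> quot Z" using coset_in_quot[of Z 0] by (simp add: coset_zero)
    ultimately have "coset Z y = Z"
      using \<sigma> by (auto simp: quot_aut_def bij_betw_def dest: inj_onD)
    then show ?thesis using fy by (auto simp: coset_eq_Z_iff)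
  qed
  ultimately show ?thesis by blast
qed

lemma psi_surj:
  assumes ext: "\<forall>\<sigma>\<in>quot_aut scale br Z. \<exists>\<sigma>'\<in>lie_aut scale br. \<forall>a. coset Z (\<sigma>' a) = \<sigma> (coset Z a)"
  shows "psi Z ` carrier (aut_grp scale br Z) = carrier (quot_aut_grp scale br Z)"
proof
  show "psi Z ` carrier (aut_grp scale br Z) \<subseteq> carrier (quot_aut_grp scale br Z)"
    by (auto simp: psi_in_quot_aut quot_aut_grp_def)
  show "carrier (quot_aut_grp scale br Z) \<subseteq> psi Z ` carrier (aut_grp scale br Z)"
  proof
    fix \<sigma> assume "\<sigma> \<in> carrier (quot_aut_grp scale br Z)"
    then have \<sigma>: "\<sigma> \<in> quot_aut scale br Z" by (simp add: quot_aut_grp_def)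
    then obtain f where f: "f \<in> lie_aut scale br" and lift: "\<And>a. coset Z (f a) = \<sigma> (coset Z a)"
      using ext by blast
    have fZ: "f ` Z = Z" using lift_fixes_Z[OF f \<sigma> lift] .
    have "psi Z f = \<sigma>"
    proof (rule extensionalityI[of _ "quot Z"])
      fix U assume "U \<in> quot Z"
      then show "psi Z f U = \<sigma> U"
        using f fZ lift by (auto simp: psi_coset lie_aut_def)
    qed (use \<sigma> in \<open>simp_all add: psi_def quot_aut_def\<close>)
    moreover have "f \<in> carrier (aut_grp scale br Z)" using f fZ by (simp add: aut_grp_def)
    ultimately show "\<sigma> \<in> psi Z ` carrier (aut_grp scale br Z)" by blast
  qed
qed

lemma kernel_psi:
  "kernel (aut_grp scale br Z) (quot_aut_grp scale br Z) (psi Z) =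
     {f \<in> carrier (aut_grp scale br Z). \<forall>a. f a - a \<in> Z}"
proof -
  have "psi Z f = restrict id (quot Z) \<longleftrightarrow> (\<forall>a. f a - a \<in> Z)"
    if "f \<in> carrier (aut_grp scale br Z)" for f
  proof -
    have "psi Z f = restrict id (quot Z) \<longleftrightarrow> (\<forall>U\<in>quot Z. psi Z f U = U)"
      by (auto simp: psi_def fun_eq_iff)
    also have "\<dots> \<longleftrightarrow> (\<forall>a. f a - a \<in> Z)"
      using aut_grp_carrierD[OF that] by (simp add: ball_quot_iff psi_coset coset_eq_iff)
    finally show ?thesis .
  qed
  then show ?thesis by (auto simp: kernel_def quot_aut_grp_def)
qed

lemma fixes_derived:
  assumes lin: "Vector_Spaces.linear scale scale f" and hom: "\<And>a b. f (br a b) = br (f a) (f b)"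
    and shift: "\<And>a. f a - a \<in> Z" and d: "d \<in> derived scale br"
  shows "f d = d"
proof -
  have "f (br a b) = br a b" for a b
    using hom bracket_add_central[OF shift[of a] shift[of b], of a b] by simp
  then show ?thesis
    using L.linear_eq_on[OF lin G.linear_id, of d "{br a b | a b. True}"] d by (auto simp: derived_def)
qed

lemma quot_linear_coset:
  assumes "quot_linear scale Z scale \<phi>"
  shows "\<phi> (coset Z (a + b)) = \<phi> (coset Z a) + \<phi> (coset Z b)"
    and "\<phi> (coset Z (scale c a)) = scale c (\<phi> (coset Z a))"
  using assms by (simp_all add: quot_linear_def ball_quot_iff)

lemma quot_linear_zero:
  assumes "quot_linear scale Z scale \<phi>"
  shows "\<phi> (coset Z 0) = 0"
  using quot_linear_coset(1)[OF assms, of 0 0] by simp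

lemma section_coset_diff:
  assumes "\<forall>w\<in>quot Z. coset Z (s w) = w"
  shows "s (coset Z a) - a \<in> Z"
  using assms[rule_format, OF coset_in_quot] by (simp add: coset_eq_iff)

lemma kernel_subset_tau_maps:
  assumes s_lin: "quot_linear scale Z scale s" and s_sec: "\<forall>w\<in>quot Z. coset Z (s w) = w"
    and Z_derived: "Z \<subseteq> derived scale br"
    and f: "f \<in> carrier (aut_grp scale br Z)" and shift: "\<forall>a. f a - a \<in> Z"
  shows "f \<in> tau_maps scale br Z s"
proof -
  note f = aut_grp_carrierD[OF f]
  have f_fixes: "f d = d" if "d \<in> derived scale br" for d
    using fixes_derived[OF f(2,4)] shift that by blast
  define \<phi> where "\<phi> w = f (s w) - s w" for w
  have "quot_linear scale Z scale \<phi>"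
    unfolding quot_linear_def ball_quot_iff \<phi>_def
    by (simp add: quot_linear_coset[OF s_lin] L.linear_add[OF f(2)] L.linear_scale[OF f(2)]
        G.scale_right_diff_distrib)
  moreover have "\<phi> ` quot Z \<subseteq> Z" using shift by (auto simp: \<phi>_def)
  moreover have "\<phi> ` quot_derived scale br Z \<subseteq> {0}"
  proof (clarsimp simp: quot_derived_def)
    fix d assume d: "d \<in> derived scale br"
    define z where "z = s (coset Z d) - d"
    have z: "z \<in> Z" using section_coset_diff[OF s_sec] by (simp add: z_def)
    have "\<phi> (coset Z d) = f (d + z) - (d + z)" by (simp add: \<phi>_def z_def)
    also have "\<dots> = 0" using f_fixes[OF d] f_fixes z Z_derived L.linear_add[OF f(2)] by auto
    finally show "\<phi> (coset Z d) = 0" .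
  qed
  ultimately show ?thesis
    using f(2) f_fixes Z_derived by (auto simp: tau_maps_def \<phi>_def intro!: exI[of _ \<phi>])
qed

lemma tau_map_eq:
  assumes s_sec: "\<forall>w\<in>quot Z. coset Z (s w) = w" and lin: "Vector_Spaces.linear scale scale \<tau>"
    and \<tau>_s: "\<forall>w\<in>quot Z. \<tau> (s w) = s w + \<phi> w" and \<tau>_Z: "\<forall>z\<in>Z. \<tau> z = z"
  shows "\<tau> a = a + \<phi> (coset Z a)"
proof -
  define w where "w = coset Z a"
  have "s w - a \<in> Z" using section_coset_diff[OF s_sec] by (simp add: w_def)
  have "\<tau> a = \<tau> (s w) - \<tau> (s w - a)" by (simp add: L.linear_diff[OF lin])
  also have "\<dots> = (s w + \<phi> w) - (s w - a)" using \<tau>_s \<tau>_Z \<open>s w - a \<in> Z\<close> by (simp add: w_def)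
  finally show ?thesis by (simp add: w_def)
qed

lemma shear_in_aut_grp:
  assumes lin: "Vector_Spaces.linear scale scale \<tau>" and \<phi>_lin: "quot_linear scale Z scale \<phi>"
    and \<phi>_Z: "\<phi> ` quot Z \<subseteq> Z" and \<phi>_derived: "\<phi> ` quot_derived scale br Z \<subseteq> {0}"
    and \<tau>_eq: "\<And>a. \<tau> a = a + \<phi> (coset Z a)"
  shows "\<tau> \<in> carrier (aut_grp scale br Z)"
proof -
  have \<phi>_in_Z: "\<phi> (coset Z a) \<in> Z" for a using \<phi>_Z by auto
  have \<tau>_Z: "\<tau> z = z" if "z \<in> Z" for z
  proof -
    have "coset Z z = coset Z 0" using that by (simp add: coset_eq_iff)
    then show ?thesis using \<tau>_eq[of z] quot_linear_zero[OF \<phi>_lin] by simp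
  qed
  have "inj \<tau>"
  proof (rule injI)
    fix a b assume "\<tau> a = \<tau> b"
    then have "\<tau> (a - b) = 0" by (simp add: L.linear_diff[OF lin])
    then have "a - b = - \<phi> (coset Z (a - b))" using \<tau>_eq[of "a - b"] by (simp add: eq_neg_iff_add_eq_0)
    then have "a - b \<in> Z" using Z_neg[OF \<phi>_in_Z] by metis
    then show "a = b" using \<tau>_Z \<open>\<tau> (a - b) = 0\<close> by simp
  qed
  moreover have "surj \<tau>"
  proof (rule surjI)
    fix b
    have "coset Z (b - \<phi> (coset Z b)) = coset Z b" using \<phi>_in_Z[of b] by (simp add: coset_eq_iff Z_neg)
    then show "\<tau> (b - \<phi> (coset Z b)) = b" using \<tau>_eq[of "b - \<phi> (coset Z b)"] by simp
  qed
  moreover have "\<tau> (br a b) = br (\<tau> a) (\<tau> b)" for a b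
  proof -
    have "br a b \<in> derived scale br" unfolding derived_def by (rule G.span_base) blast
    then have "\<tau> (br a b) = br a b" using \<phi>_derived \<tau>_eq[of "br a b"] by (auto simp: quot_derived_def)
    also have "\<dots> = br (\<tau> a) (\<tau> b)" by (simp add: \<tau>_eq bracket_add_central \<phi>_in_Z)
    finally show ?thesis .
  qed
  moreover have "\<tau> ` Z = Z" using \<tau>_Z by simp
  ultimately show ?thesis using lin by (simp add: aut_grp_def lie_aut_def bij_def)
qed

lemma tau_maps_subset_kernel:
  assumes s_sec: "\<forall>w\<in>quot Z. coset Z (s w) = w"
  shows "tau_maps scale br Z s \<subseteq> kernel (aut_grp scale br Z) (quot_aut_grp scale br Z) (psi Z)"
proof
  fix \<tau> assume "\<tau> \<in> tau_maps scale br Z s"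
  then obtain \<phi> where lin: "Vector_Spaces.linear scale scale \<tau>" and \<phi>_lin: "quot_linear scale Z scale \<phi>"
    and \<phi>_Z: "\<phi> ` quot Z \<subseteq> Z" and \<phi>_derived: "\<phi> ` quot_derived scale br Z \<subseteq> {0}"
    and \<tau>_s: "\<forall>w\<in>quot Z. \<tau> (s w) = s w + \<phi> w" and \<tau>_Z: "\<forall>z\<in>Z. \<tau> z = z"
    unfolding tau_maps_def by blast
  have \<tau>_eq: "\<tau> a = a + \<phi> (coset Z a)" for a
    using tau_map_eq[OF s_sec lin \<tau>_s \<tau>_Z] .
  have "\<tau> \<in> carrier (aut_grp scale br Z)"
    using shear_in_aut_grp[OF lin \<phi>_lin \<phi>_Z \<phi>_derived \<tau>_eq] .
  moreover have "\<tau> a - a \<in> Z" for a using \<tau>_eq[of a] \<phi>_Z by auto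
  ultimately show "\<tau> \<in> kernel (aut_grp scale br Z) (quot_aut_grp scale br Z) (psi Z)"
    by (simp add: kernel_psi)
qed

lemma kernel_psi_eq_tau_maps:
  assumes s_lin: "quot_linear scale Z scale s" and s_sec: "\<forall>w\<in>quot Z. coset Z (s w) = w"
    and Z_derived: "Z \<subseteq> derived scale br"
  shows "kernel (aut_grp scale br Z) (quot_aut_grp scale br Z) (psi Z) = tau_maps scale br Z s"
  using kernel_subset_tau_maps[OF assms] tau_maps_subset_kernel[OF s_sec] by (auto simp: kernel_psi)

end

theorem corollary3p2:
  fixes scale :: "'k::field \<Rightarrow> 'g::ab_group_add \<Rightarrow> 'g"
    and br :: "'g \<Rightarrow> 'g \<Rightarrow> 'g"
    and Z :: "'g set"
    and s :: "'g set \<Rightarrow> 'g"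
  assumes lie: "lie_algebra scale br"
    and Z_sub: "module.subspace scale Z"
    and Z_centre: "Z \<subseteq> lie_centre br"
    and s_lin: "quot_linear scale Z scale s"
    and s_sec: "\<forall>w\<in>quot Z. proj Z (s w) = w"
    and ext: "\<forall>\<sigma>\<in>quot_aut scale br Z. \<exists>\<sigma>'\<in>lie_aut scale br. \<forall>a. proj Z (\<sigma>' a) = \<sigma> (proj Z a)"
    and Z_derived: "Z \<subseteq> derived scale br"
  shows "group (aut_grp scale br Z) \<and>
         group (quot_aut_grp scale br Z) \<and>
         subgroup (tau_maps scale br Z s) (aut_grp scale br Z) \<and>
         psi Z \<in> epi (aut_grp scale br Z) (quot_aut_grp scale br Z) \<and>
         kernel (aut_grp scale br Z) (quot_aut_grp scale br Z) (psi Z) = tau_maps scale br Z s"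
proof -
  interpret lie_central_subspace scale br Z
    using lie Z_sub Z_centre by (rule lie_central_subspace.intro)
  have G: "group (aut_grp scale br Z)" by (rule group_aut_grp[OF vector_space])
  have W: "group (quot_aut_grp scale br Z)" by (rule group_quot_aut_grp)
  have hom: "group_hom (aut_grp scale br Z) (quot_aut_grp scale br Z) (psi Z)"
    using G W psi_hom by (simp add: group_hom_def group_hom_axioms_def)
  have "psi Z \<in> epi (aut_grp scale br Z) (quot_aut_grp scale br Z)"
    using psi_hom psi_surj[OF ext] by (simp add: epi_def)
  moreover have "kernel (aut_grp scale br Z) (quot_aut_grp scale br Z) (psi Z) = tau_maps scale br Z s"
    by (rule kernel_psi_eq_tau_maps[OF s_lin s_sec Z_derived])
  ultimately show ?thesis using G W group_hom.subgroup_kernel[OF hom] by simp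
qed

end
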